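(* There exist quaternary Hermitian LCD codes with parameters $[22,12,7]$, $[23,13,7]$, $[24,14,7]$ and $[25,15,7]$.
   Context: $\mathbb{F}_4=\{0,1,\omega,\omega^2\}$. A quaternary $[n,k,d]$ code is a $k$-dimensional subspace $C\subseteq\mathbb{F}_4^n$ with minimum nonzero Hamming weight $d$. The Hermitian inner product is $\langle x,y\rangle_H=\sum x_i y_i^2$ and $C^{\perp_H}$ is the corresponding dual; $C$ is Hermitian LCD if $C\cap C^{\perp_H}=\{0\}$. *)

theory Defs
  imports "HOL-Analysis.Analysis"
begin

datatype gf4 = Z4 | O4 | W4 | WW4
  (* Z4 = 0, O4 = 1, W4 = omega, WW4 = omega^2 *)

fun gf4_add :: "gf4 \<Rightarrow> gf4 \<Rightarrow> gf4" where
  "gf4_add Z4 y = y"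
| "gf4_add x Z4 = x"
| "gf4_add O4 O4 = Z4" | "gf4_add O4 W4 = WW4" | "gf4_add O4 WW4 = W4"
| "gf4_add W4 O4 = WW4" | "gf4_add W4 W4 = Z4" | "gf4_add W4 WW4 = O4"
| "gf4_add WW4 O4 = W4" | "gf4_add WW4 W4 = O4" | "gf4_add WW4 WW4 = Z4"

fun gf4_mul :: "gf4 \<Rightarrow> gf4 \<Rightarrow> gf4" where
  "gf4_mul Z4 y = Z4"
| "gf4_mul x Z4 = Z4"
| "gf4_mul O4 y = y"
| "gf4_mul x O4 = x"
| "gf4_mul W4 W4 = WW4" | "gf4_mul W4 WW4 = O4"
| "gf4_mul WW4 W4 = O4" | "gf4_mul WW4 WW4 = W4"

fun gf4_inv :: "gf4 \<Rightarrow> gf4" where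
  "gf4_inv Z4 = Z4" | "gf4_inv O4 = O4" | "gf4_inv W4 = WW4" | "gf4_inv WW4 = W4"

lemma gf4_cases_all: "(\<forall>x::gf4. P x) \<longleftrightarrow> P Z4 \<and> P O4 \<and> P W4 \<and> P WW4"
  by (metis gf4.exhaust)

instantiation gf4 :: field
begin
definition "0 = Z4"
definition "1 = O4"
definition "x + y = gf4_add x y"
definition "x * y = gf4_mul x y"
definition "uminus (x::gf4) = x"
definition "x - y = gf4_add x y"
definition "inverse x = gf4_inv x"
definition "x div y = gf4_mul x (gf4_inv y)"
instance
proof
  fix a b c :: gf4
  show "a + b + c = a + (b + c)" unfolding plus_gf4_def
    by (cases a; cases b; cases c) simp_all
  show "a + b = b + a" unfolding plus_gf4_def by (cases a; cases b) simp_all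
  show "0 + a = a" unfolding plus_gf4_def zero_gf4_def by (cases a) simp_all
  show "- a + a = 0" unfolding plus_gf4_def zero_gf4_def uminus_gf4_def by (cases a) simp_all
  show "a - b = a + - b" unfolding plus_gf4_def minus_gf4_def uminus_gf4_def by simp
  show "a * b * c = a * (b * c)" unfolding times_gf4_def
    by (cases a; cases b; cases c) simp_all
  show "a * b = b * a" unfolding times_gf4_def by (cases a; cases b) simp_all
  show "1 * a = a" unfolding times_gf4_def one_gf4_def by (cases a) simp_all
  show "(a + b) * c = a * c + b * c" unfolding times_gf4_def plus_gf4_def
    by (cases a; cases b; cases c) simp_all
  show "(0::gf4) \<noteq> 1" unfolding zero_gf4_def one_gf4_def by simp
  show "a \<noteq> 0 \<Longrightarrow> inverse a * a = 1" unfolding times_gf4_def inverse_gf4_def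
      zero_gf4_def one_gf4_def by (cases a) simp_all
  show "a div b = a * inverse b" unfolding times_gf4_def inverse_gf4_def divide_gf4_def by simp
  show "inverse (0::gf4) = 0" unfolding inverse_gf4_def zero_gf4_def by simp
qed
end

definition hamming_weight :: "gf4 ^ 'n \<Rightarrow> nat" where
  "hamming_weight x = card {i. x $ i \<noteq> 0}"

definition min_weight :: "(gf4 ^ 'n) set \<Rightarrow> nat" where
  "min_weight C = Min (hamming_weight ` (C - {0}))"

definition is_code :: "(gf4 ^ 'n) set \<Rightarrow> nat \<Rightarrow> nat \<Rightarrow> bool" where
  "is_code C k d \<longleftrightarrow> vec.subspace C \<and> vec.dim C = k \<and> C \<noteq> {0} \<and> min_weight C = d"

definition herm_inner :: "gf4 ^ 'n \<Rightarrow> gf4 ^ 'n \<Rightarrow> gf4" where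
  "herm_inner x y = (\<Sum>i\<in>UNIV. x $ i * (y $ i) ^ 2)"

definition herm_dual :: "(gf4 ^ 'n) set \<Rightarrow> (gf4 ^ 'n) set" where
  "herm_dual C = {y. \<forall>x\<in>C. herm_inner x y = 0}"

definition herm_LCD :: "(gf4 ^ 'n) set \<Rightarrow> bool" where
  "herm_LCD C \<longleftrightarrow> C \<inter> herm_dual C = {0}"

end

theory Submission
  imports Defs
begin

text \<open>
  All four codes are shortenings of one [25,15] code with systematic generator matrix
  \<open>[I | P25]\<close>.  The code generated by \<open>[I | take k P25]\<close> arises from it by keeping the codewords
  whose message vanishes beyond position \<open>k\<close> and deleting those positions, so its minimum distance
  is at least that of the long code; a codeword of weight 7 already lies in the [22,12] code.

  The minimum distance of the long code is certified with four information sets.  Write a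
  codeword as \<open>(b\<^sub>1, b\<^sub>2, b\<^sub>3, R)\<close> with message blocks of length 5 and redundancy \<open>R\<close> of length 10.
  Besides the message positions, each \<open>(b\<^sub>j, R)\<close> is an information set, with redundancy matrix
  \<open>P25_altj\<close>.  A codeword of weight at most 6 has weight at most 3 on one of these four sets, and
  enumerating the messages of weight at most 3 (up to scalars) for each of them rules this out.

  A code with generator matrix \<open>G\<close> is Hermitian LCD when its Hermitian Gram matrix is invertible:
  if \<open>m G\<close> is Hermitian orthogonal to every row of \<open>G\<close> then, conjugation \<open>x \<mapsto> x\<^sup>2\<close> being
  additive, the vector \<open>(m\<^sub>i\<^sup>2)\<close> lies in the kernel of the Gram matrix.  The matrices \<open>N12\<close>, ...,
  \<open>N15\<close> are explicit left inverses.
\<close>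

instance gf4 :: finite
proof
  have "(UNIV :: gf4 set) = {Z4, O4, W4, WW4}"
    using gf4.exhaust by auto
  then show "finite (UNIV :: gf4 set)"
    by (metis finite.emptyI finite.insertI)
qed

lemma gf4_nonzero_cases: "(a::gf4) \<noteq> 0 \<Longrightarrow> a = 1 \<or> a = W4 \<or> a = WW4"
  by (cases a) (simp_all add: zero_gf4_def one_gf4_def)

lemma gf4_square_add: "((a::gf4) + b)\<^sup>2 = a\<^sup>2 + b\<^sup>2"
  by (cases a; cases b) (simp_all add: plus_gf4_def times_gf4_def power2_eq_square)

lemma gf4_square_sum: "(\<Sum>i\<in>I. f i)\<^sup>2 = (\<Sum>i\<in>I. (f i :: gf4)\<^sup>2)"
  by (induction I rule: infinite_finite_induct) (simp_all add: gf4_square_add)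

section \<open>Linear combinations of list vectors\<close>

definition list_weight :: "'a::zero list \<Rightarrow> nat" where
  "list_weight x = length (filter (\<lambda>a. a \<noteq> 0) x)"

lemma list_weight_Nil [simp]: "list_weight [] = 0"
  and list_weight_Cons [simp]:
    "list_weight (a # x) = (if a = 0 then list_weight x else Suc (list_weight x))"
  and list_weight_append [simp]: "list_weight (x @ y) = list_weight x + list_weight y"
  by (simp_all add: list_weight_def)

lemma list_weight_replicate_zero [simp]: "list_weight (replicate n 0) = 0"
  by (simp add: list_weight_def)

lemma list_weight_eq_0_iff: "list_weight x = 0 \<longleftrightarrow> x = replicate (length x) 0"
  by (induction x) auto

lemma list_weight_scale:
  "(c::'a::semiring_no_zero_divisors) \<noteq> 0 \<Longrightarrow> list_weight (map ((*) c) x) = list_weight x"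
  by (induction x) auto

lemma map2_add_zero_left: "length x = n \<Longrightarrow> map2 (+) (replicate n 0) x = (x :: 'a::monoid_add list)"
  by (induction x arbitrary: n) (auto simp: Suc_length_conv)

lemma map2_add_zero_right: "length x = n \<Longrightarrow> map2 (+) x (replicate n 0) = (x :: 'a::monoid_add list)"
  by (induction x arbitrary: n) (auto simp: Suc_length_conv)

lemma map2_add_commute: "map2 (+) x y = map2 (+) y (x :: 'a::ab_semigroup_add list)"
  by (rule nth_equalityI) (simp_all add: add.commute)

lemma map2_add_assoc:
  "map2 (+) (map2 (+) x y) z = map2 (+) x (map2 (+) y (z :: 'a::semigroup_add list))"
  by (rule nth_equalityI) (simp_all add: add.assoc)

lemma map_mult_zero: "map ((*) 0) x = replicate (length x) (0 :: 'a::mult_zero)"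
  by (induction x) auto

text \<open>\<open>lin_comb n G m\<close> is the product \<open>m G\<close> of a row vector with a matrix given by its rows; the
  row length \<open>n\<close> is an argument so that the empty combination is the zero vector of length \<open>n\<close>.\<close>

fun lin_comb :: "nat \<Rightarrow> 'a::comm_semiring_1 list list \<Rightarrow> 'a list \<Rightarrow> 'a list" where
  "lin_comb n (r # G) (a # m) = map2 (+) (map ((*) a) r) (lin_comb n G m)"
| "lin_comb n _ _ = replicate n 0"

lemma length_lin_comb [simp]: "\<forall>r\<in>set G. length r = n \<Longrightarrow> length (lin_comb n G m) = n"
  by (induction n G m rule: lin_comb.induct) auto

lemma nth_lin_comb:
  assumes "\<forall>r\<in>set G. length r = n" "length m = length G" "p < n"
  shows "lin_comb n G m ! p = (\<Sum>i<length G. m ! i * G ! i ! p)"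
  using assms
proof (induction n G m rule: lin_comb.induct)
  case (1 n r G a m)
  then show ?case
    by (simp add: sum.lessThan_Suc_shift del: sum.lessThan_Suc)
qed auto

lemma lin_comb_eqI:
  assumes "\<forall>r\<in>set G. length r = n" "length m = length G"
    and "length x = n" "\<And>p. p < n \<Longrightarrow> x ! p = (\<Sum>i<length G. m ! i * G ! i ! p)"
  shows "lin_comb n G m = x"
  using assms by (intro nth_equalityI) (simp_all add: nth_lin_comb)

lemma lin_comb_zero:
  "\<forall>r\<in>set G. length r = n \<Longrightarrow> lin_comb n G (replicate (length G) 0) = replicate n 0"
  by (rule lin_comb_eqI) simp_all

lemma lin_comb_scale:
  assumes "\<forall>r\<in>set G. length r = n" "length m = length G"
  shows "lin_comb n G (map ((*) c) m) = map ((*) c) (lin_comb n G m)"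
  using assms by (intro lin_comb_eqI) (simp_all add: nth_lin_comb sum_distrib_left mult.assoc)

lemma lin_comb_add:
  assumes "\<forall>r\<in>set G. length r = n" "length x = length G" "length y = length G"
  shows "lin_comb n G (map2 (+) x y) = map2 (+) (lin_comb n G x) (lin_comb n G y)"
  using assms by (intro lin_comb_eqI) (simp_all add: nth_lin_comb distrib_right sum.distrib)

lemma lin_comb_append_zeros:
  assumes "\<forall>r\<in>set G. length r = n" "length G = length m + j"
  shows "lin_comb n G (m @ replicate j 0) = lin_comb n (take (length m) G) m"
  using assms
proof (induction m arbitrary: G)
  case Nil
  then show ?case
    using lin_comb_zero[of G n] by simp
next
  case (Cons a m)
  then obtain r G' where "G = r # G'"
    by (cases G) auto
  with Cons show ?case
    by simp
qed

lemma lin_comb_select: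
  assumes "\<forall>r\<in>set G. length r = n" "length m = length G" "\<forall>j\<in>set J. j < n"
  shows "map ((!) (lin_comb n G m)) J = lin_comb (length J) (map (\<lambda>r. map ((!) r) J) G) m"
  using assms by (intro lin_comb_eqI[symmetric]) (simp_all add: nth_lin_comb)

lemma lin_comb_assoc:
  assumes "\<forall>r\<in>set G. length r = length A" "\<forall>a\<in>set A. length a = n" "length m = length G"
  shows "lin_comb n A (lin_comb (length A) G m) = lin_comb n (map (lin_comb n A) G) m"
proof (rule lin_comb_eqI[symmetric])
  fix p assume "p < n"
  have "lin_comb n A (lin_comb (length A) G m) ! p
      = (\<Sum>l<length A. (\<Sum>i<length G. m ! i * G ! i ! l) * A ! l ! p)"
    using assms \<open>p < n\<close> by (simp add: nth_lin_comb)
  also have "\<dots> = (\<Sum>i<length G. m ! i * (\<Sum>l<length A. G ! i ! l * A ! l ! p))"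
    by (simp add: sum_distrib_left sum_distrib_right mult.assoc sum.swap[of _ "{..<length A}"])
  also have "\<dots> = (\<Sum>i<length G. m ! i * map (lin_comb n A) G ! i ! p)"
    using assms \<open>p < n\<close> by (intro sum.cong refl) (simp add: nth_lin_comb)
  finally show "lin_comb n A (lin_comb (length A) G m) ! p
      = (\<Sum>i<length (map (lin_comb n A) G). m ! i * map (lin_comb n A) G ! i ! p)"
    by simp
qed (use assms in auto)

lemma map_nth_upt: "j \<le> length xs \<Longrightarrow> map ((!) xs) [i..<j] = take (j - i) (drop i xs)"
  by (rule nth_equalityI) simp_all

lemma lin_comb_information_set:
  assumes G: "\<forall>r\<in>set G. length r = N" "length m = length G"
    and IJ: "\<forall>i\<in>set I. i < N" "\<forall>j\<in>set J. j < N"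
    and A: "length A = length I" "\<forall>a\<in>set A. length a = length J"
    and rows: "\<forall>r\<in>set G. map ((!) r) J = lin_comb (length J) A (map ((!) r) I)"
  shows "map ((!) (lin_comb N G m)) J = lin_comb (length J) A (map ((!) (lin_comb N G m)) I)"
proof -
  have "map ((!) (lin_comb N G m)) J = lin_comb (length J) (map (\<lambda>r. map ((!) r) J) G) m"
    using G IJ(2) by (rule lin_comb_select)
  also have "map (\<lambda>r. map ((!) r) J) G = map (lin_comb (length J) A) (map (\<lambda>r. map ((!) r) I) G)"
    using rows by simp
  also have "lin_comb (length J) \<dots> m
      = lin_comb (length J) A (lin_comb (length I) (map (\<lambda>r. map ((!) r) I) G) m)"
    using A G lin_comb_assoc[of "map (\<lambda>r. map ((!) r) I) G" A "length J" m] by simp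
  also have "lin_comb (length I) (map (\<lambda>r. map ((!) r) I) G) m = map ((!) (lin_comb N G m)) I"
    using G IJ(1) by (rule lin_comb_select[symmetric])
  finally show ?thesis .
qed

definition id_rows :: "nat \<Rightarrow> 'a::zero_neq_one list list" where
  "id_rows k = map (\<lambda>i. map (\<lambda>j. if i = j then 1 else 0) [0..<k]) [0..<k]"

lemma id_rows_nth: "i < k \<Longrightarrow> j < k \<Longrightarrow> id_rows k ! i ! j = (if i = j then 1 else 0)"
  by (simp add: id_rows_def)

lemma lin_comb_id_row:
  assumes "\<forall>r\<in>set G. length r = n" "i < length G"
  shows "lin_comb n G (id_rows (length G) ! i) = G ! i"
  using assms
  by (intro lin_comb_eqI) (simp_all add: id_rows_def if_distrib[of "\<lambda>a. a * _"] cong: if_cong)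

definition is_left_inverse :: "'a::comm_semiring_1 list list \<Rightarrow> 'a list list \<Rightarrow> bool" where
  "is_left_inverse N M \<longleftrightarrow> length N = length M \<and> (\<forall>x\<in>set N. length x = length M)
    \<and> map (lin_comb (length M) M) N = id_rows (length M)"

lemma left_inverse_kernel:
  assumes inv: "is_left_inverse N M" and M: "\<forall>r\<in>set M. length r = length M"
    and s: "length s = length M" "\<And>j. j < length M \<Longrightarrow> (\<Sum>i<length M. M ! j ! i * s ! i) = 0"
  shows "s = replicate (length M) 0"
proof (rule nth_equalityI)
  fix l assume "l < length s"
  then have l: "l < length M"
    using s by simp
  have N: "length N = length M" "length (N ! l) = length M"
    using inv l by (auto simp: is_left_inverse_def)
  have "map (lin_comb (length M) M) N ! l = id_rows (length M) ! l"
    using inv by (simp add: is_left_inverse_def)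
  then have Nl: "lin_comb (length M) M (N ! l) = id_rows (length M) ! l"
    using N l by simp
  have entry: "id_rows (length M) ! l ! i = (\<Sum>j<length M. N ! l ! j * M ! j ! i)"
    if "i < length M" for i
    unfolding Nl[symmetric] using nth_lin_comb[OF M, of "N ! l" i] N that by simp
  have "s ! l = (\<Sum>i<length M. id_rows (length M) ! l ! i * s ! i)"
    using l by (simp add: id_rows_nth if_distrib[of "\<lambda>a. a * _"] cong: if_cong)
  also have "\<dots> = (\<Sum>i<length M. \<Sum>j<length M. N ! l ! j * (M ! j ! i * s ! i))"
    by (intro sum.cong refl) (simp add: entry sum_distrib_right mult.assoc)
  also have "\<dots> = (\<Sum>j<length M. N ! l ! j * (\<Sum>i<length M. M ! j ! i * s ! i))"
    by (subst sum.swap) (simp add: sum_distrib_left)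
  also have "\<dots> = 0"
    using s(2) by simp
  finally show "s ! l = replicate (length M) 0 ! l"
    using l by simp
qed (use s in simp)

definition systematic :: "'a::zero_neq_one list list \<Rightarrow> 'a list list" where
  "systematic A = map2 (@) (id_rows (length A)) A"

lemma length_systematic [simp]: "length (systematic A) = length A"
  by (simp add: systematic_def id_rows_def)

lemma systematic_rows:
  "\<forall>r\<in>set A. length r = n \<Longrightarrow> \<forall>r\<in>set (systematic A). length r = length A + n"
  by (auto simp: systematic_def id_rows_def set_zip)

lemma lin_comb_systematic:
  assumes "\<forall>r\<in>set A. length r = n" "length m = length A"
  shows "lin_comb (length A + n) (systematic A) m = m @ lin_comb n A m"
proof (rule lin_comb_eqI)
  fix p assume p: "p < length A + n"
  have row: "i < length A \<Longrightarrow> systematic A ! i ! p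
      = (if p < length A then (if i = p then 1 else 0) else A ! i ! (p - length A))" for i
    by (simp add: systematic_def id_rows_def nth_append)
  show "(m @ lin_comb n A m) ! p = (\<Sum>i<length (systematic A). m ! i * systematic A ! i ! p)"
  proof (cases "p < length A")
    case True
    then show ?thesis
      using assms by (simp add: row nth_append if_distrib[of "(*) _"] cong: if_cong)
  next
    case False
    then show ?thesis
      using assms p by (simp add: row nth_append nth_lin_comb)
  qed
qed (use assms systematic_rows in auto)

lemma lin_comb_systematic_take:
  assumes "\<forall>r\<in>set A. length r = n" "length m = k" "k \<le> length A"
  shows "lin_comb (k + n) (systematic (take k A)) m
    = m @ lin_comb n A (m @ replicate (length A - k) 0)"
proof -
  have "\<forall>r\<in>set (take k A). length r = n"
    using assms(1) by (auto dest: in_set_takeD)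
  then show ?thesis
    using assms lin_comb_systematic[of "take k A" n m]
      lin_comb_append_zeros[of A n m "length A - k"]
    by (simp add: min_absorb2)
qed

lemma systematic_full_rank:
  assumes "\<forall>r\<in>set A. length r = n" "length m = length A"
    and "lin_comb (length A + n) (systematic A) m = replicate (length A + n) 0"
  shows "m = replicate (length A) 0"
  using arg_cong[OF assms(3), of "take (length A)"] lin_comb_systematic[OF assms(1,2)] assms(2)
  by simp

definition herm_inner_list :: "gf4 list \<Rightarrow> gf4 list \<Rightarrow> gf4" where
  "herm_inner_list x y = sum_list (map2 (\<lambda>a b. a * b\<^sup>2) x y)"

lemma herm_inner_list_eq_sum:
  "length x = length y \<Longrightarrow> herm_inner_list x y = (\<Sum>p<length x. x ! p * (y ! p)\<^sup>2)"
  by (simp add: herm_inner_list_def sum_list_sum_nth atLeast0LessThan)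

lemma herm_inner_list_lin_comb:
  assumes "\<forall>r\<in>set G. length r = length x" "length m = length G"
  shows "herm_inner_list x (lin_comb (length x) G m)
    = (\<Sum>i<length G. (m ! i)\<^sup>2 * herm_inner_list x (G ! i))"
proof -
  have "herm_inner_list x (lin_comb (length x) G m)
      = (\<Sum>p<length x. x ! p * (\<Sum>i<length G. m ! i * G ! i ! p)\<^sup>2)"
    using assms by (simp add: herm_inner_list_eq_sum nth_lin_comb)
  also have "\<dots> = (\<Sum>p<length x. \<Sum>i<length G. (m ! i)\<^sup>2 * (x ! p * (G ! i ! p)\<^sup>2))"
    by (simp add: gf4_square_sum power_mult_distrib sum_distrib_left ac_simps)
  also have "\<dots> = (\<Sum>i<length G. (m ! i)\<^sup>2 * herm_inner_list x (G ! i))"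
    using assms by (subst sum.swap) (simp add: herm_inner_list_eq_sum sum_distrib_left)
  finally show ?thesis .
qed

definition herm_gram :: "gf4 list list \<Rightarrow> gf4 list list" where
  "herm_gram G = map (\<lambda>x. map (herm_inner_list x) G) G"

section \<open>Certified lower bounds on the minimum weight\<close>

text \<open>\<open>min_weight_check d A t u acc\<close> checks \<open>d \<le> u + wt m + wt (acc + m A)\<close> for all messages \<open>m\<close>
  with at most \<open>t\<close> nonzero entries; it runs on the rows \<open>A\<close> not yet processed, after \<open>u\<close> nonzero
  coefficients with contribution \<open>acc\<close> have been chosen for the earlier rows.  Scaling preserves
  weights, so the first nonzero coefficient is taken to be 1 and the zero message is skipped.  The
  case distinction on \<open>u\<close> is an \<open>if\<close> so that evaluation by the simplifier never enters the branch
  not taken.\<close>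

fun min_weight_check :: "nat \<Rightarrow> gf4 list list \<Rightarrow> nat \<Rightarrow> nat \<Rightarrow> gf4 list \<Rightarrow> bool" where
  "min_weight_check d [] t u acc \<longleftrightarrow> u = 0 \<or> d \<le> u + list_weight acc"
| "min_weight_check d (r # A) 0 u acc \<longleftrightarrow> min_weight_check d A 0 u acc"
| "min_weight_check d (r # A) (Suc t) u acc \<longleftrightarrow>
     min_weight_check d A (Suc t) u acc \<and>
     min_weight_check d A t (Suc u) (map2 (+) r acc) \<and>
     (if u = 0 then True
      else min_weight_check d A t (Suc u) (map2 (+) (map ((*) W4) r) acc) \<and>
        min_weight_check d A t (Suc u) (map2 (+) (map ((*) WW4) r) acc))"

lemma min_weight_check_sound_started:
  assumes "min_weight_check d A t u acc" "0 < u"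
    and "\<forall>r\<in>set A. length r = n" "length acc = n" "length m = length A" "list_weight m \<le> t"
  shows "d \<le> u + list_weight m + list_weight (map2 (+) (lin_comb n A m) acc)"
  using assms
proof (induction A arbitrary: t u acc m)
  case Nil
  then show ?case
    by (simp add: map2_add_zero_left)
next
  case (Cons r A)
  then obtain a m' where m: "m = a # m'"
    by (cases m) auto
  have r: "length r = n" and A: "\<forall>r\<in>set A. length r = n" and m': "length m' = length A"
    using Cons.prems m by auto
  show ?case
  proof (cases "a = 0")
    case True
    then have "lin_comb n (r # A) m = lin_comb n A m'"
      using m r A by (simp add: map_mult_zero map2_add_zero_left)
    moreover have "min_weight_check d A t u acc"
      using Cons.prems(1) by (cases t) auto
    ultimately show ?thesis
      using True Cons.IH[of t u acc m'] Cons.prems m A m' by simp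
  next
    case False
    define acc' where "acc' = map2 (+) (map ((*) a) r) acc"
    have wt: "list_weight m = Suc (list_weight m')"
      using False m by simp
    then obtain t' where t: "t = Suc t'"
      using Cons.prems(6) by (cases t) auto
    have "min_weight_check d A t' (Suc u) acc'"
      using Cons.prems(1,2) t False gf4_nonzero_cases[of a] by (auto simp: acc'_def map_idI)
    then have "d \<le> Suc u + list_weight m' + list_weight (map2 (+) (lin_comb n A m') acc')"
      using Cons.IH[of t' "Suc u" acc' m'] Cons.prems A m' r wt t by (simp add: acc'_def)
    also have "map2 (+) (lin_comb n A m') acc' = map2 (+) (lin_comb n (r # A) m) acc"
      by (simp add: m acc'_def map2_add_assoc map2_add_commute[of "lin_comb n A m'"])
    finally show ?thesis
      using wt by simp
  qed
qed

lemma min_weight_check_sound: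
  assumes "min_weight_check d A t 0 (replicate n 0)"
    and "\<forall>r\<in>set A. length r = n" "length m = length A" "list_weight m \<le> t" "0 < list_weight m"
  shows "d \<le> list_weight m + list_weight (lin_comb n A m)"
  using assms
proof (induction A arbitrary: m)
  case Nil
  then show ?case
    by simp
next
  case (Cons r A)
  then obtain a m' where m: "m = a # m'"
    by (cases m) auto
  have r: "length r = n" and A: "\<forall>r\<in>set A. length r = n" and m': "length m' = length A"
    using Cons.prems m by auto
  show ?case
  proof (cases "a = 0")
    case True
    then have "lin_comb n (r # A) m = lin_comb n A m'"
      using m r A by (simp add: map_mult_zero map2_add_zero_left)
    moreover have "min_weight_check d A t 0 (replicate n 0)"
      using Cons.prems(1) by (cases t) auto
    ultimately show ?thesis
      using True Cons.IH[of m'] Cons.prems m A m' by simp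
  next
    case False
    define m'' where "m'' = map ((*) (inverse a)) m'"
    have wt: "list_weight m = Suc (list_weight m'')"
      using False m by (simp add: m''_def list_weight_scale)
    then obtain t' where t: "t = Suc t'"
      using Cons.prems(4) by (cases t) auto
    have "min_weight_check d A t' 1 (map2 (+) r (replicate n 0))"
      using Cons.prems(1) t by (simp add: map_idI)
    then have "d \<le> 1 + list_weight m'' + list_weight (map2 (+) (lin_comb n A m'') r)"
      using min_weight_check_sound_started[of d A t' 1 _ n m''] Cons.prems A m' r wt t
      by (simp add: m''_def map2_add_zero_right)
    also have "map2 (+) (lin_comb n A m'') r = map ((*) (inverse a)) (lin_comb n (r # A) m)"
      using False A m' r
      by (intro nth_equalityI) (simp_all add: m m''_def lin_comb_scale distrib_left add.commute)
    finally show ?thesis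
      using wt False by (simp add: list_weight_scale)
  qed
qed

lemma min_weight_check_information_set:
  assumes check: "min_weight_check d A t 0 (replicate n 0)" and A: "\<forall>a\<in>set A. length a = n"
    and x: "length x = length A" "list_weight x \<le> t" and y: "y = lin_comb n A x"
    and nonzero: "0 < list_weight x + list_weight y"
  shows "d \<le> list_weight x + list_weight y"
proof (cases "list_weight x = 0")
  case True
  then have "y = replicate n 0"
    using x(1) y list_weight_eq_0_iff[of x] lin_comb_zero[OF A] by simp
  then show ?thesis
    using nonzero True by simp
next
  case False
  then show ?thesis
    using min_weight_check_sound[OF check A x] y by simp
qed

section \<open>Row spaces in \<open>gf4 ^ 'n\<close>\<close>

definition enum_index :: "'n::enum \<Rightarrow> nat" where
  "enum_index = the_inv_into {..<CARD('n)} ((!) enum_class.enum)"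

lemma bij_betw_enum_nth: "bij_betw ((!) (enum_class.enum :: 'n::enum list)) {..<CARD('n)} UNIV"
  by (rule bij_betw_nth) (simp_all add: enum_distinct UNIV_enum card_UNIV_length_enum distinct_card)

lemma bij_betw_enum_index: "bij_betw (enum_index :: 'n::enum \<Rightarrow> nat) UNIV {..<CARD('n)}"
  unfolding enum_index_def by (rule bij_betw_the_inv_into[OF bij_betw_enum_nth])

lemma enum_index_nth: "j < CARD('n) \<Longrightarrow> enum_index (enum_class.enum ! j :: 'n::enum) = j"
  using bij_betw_enum_nth[where 'n='n] unfolding enum_index_def
  by (simp add: bij_betw_def the_inv_into_f_f)

lemma enum_index_less: "enum_index (x :: 'n::enum) < CARD('n)"
  using bij_betw_enum_index[where 'n='n] by (auto simp: bij_betw_def)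

definition vec_of_list :: "'a list \<Rightarrow> 'a ^ 'n::enum" where
  "vec_of_list x = (\<chi> i. x ! enum_index i)"

lemma vec_of_list_nth [simp]: "vec_of_list x $ i = x ! enum_index i"
  by (simp add: vec_of_list_def)

lemma vec_of_list_inject:
  assumes "length x = CARD('n)" "length y = CARD('n)"
  shows "(vec_of_list x :: 'a ^ 'n::enum) = vec_of_list y \<longleftrightarrow> x = y" (is "?eq \<longleftrightarrow> _")
proof
  assume eq: ?eq
  show "x = y"
  proof (rule nth_equalityI)
    fix j assume "j < length x"
    then show "x ! j = y ! j"
      using arg_cong[OF eq, of "\<lambda>v. v $ (enum_class.enum ! j :: 'n)"] assms
      by (simp add: enum_index_nth)
  qed (use assms in simp)
qed simp

lemma vec_of_list_replicate_zero: "(vec_of_list (replicate CARD('n) 0) :: 'a::zero ^ 'n::enum) = 0"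
  by (simp add: vec_eq_iff enum_index_less)

lemma vec_of_list_add:
  "length x = CARD('n) \<Longrightarrow> length y = CARD('n) \<Longrightarrow>
    (vec_of_list (map2 (+) x y) :: 'a::plus ^ 'n::enum) = vec_of_list x + vec_of_list y"
  by (simp add: vec_eq_iff enum_index_less)

lemma vec_of_list_scale:
  "length x = CARD('n) \<Longrightarrow> (vec_of_list (map ((*) c) x) :: 'a::times ^ 'n::enum) = c *s vec_of_list x"
  by (simp add: vec_eq_iff enum_index_less)

lemma vec_of_list_lin_comb:
  assumes "\<forall>r\<in>set G. length r = CARD('n)" "length m = length G"
  shows "(vec_of_list (lin_comb CARD('n) G m) :: 'a::comm_semiring_1 ^ 'n::enum)
    = (\<Sum>i<length G. m ! i *s vec_of_list (G ! i))"
  by (simp add: vec_eq_iff sum_component nth_lin_comb assms enum_index_less)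

lemma hamming_weight_zero [simp]: "hamming_weight 0 = 0"
  by (simp add: hamming_weight_def)

lemma hamming_weight_vec_of_list:
  assumes "length x = CARD('n)"
  shows "hamming_weight (vec_of_list x :: gf4 ^ 'n::enum) = list_weight x"
proof -
  have inj: "inj (enum_index :: 'n \<Rightarrow> nat)"
    using bij_betw_enum_index by (auto simp: bij_betw_def)
  have "enum_index ` {i :: 'n. x ! enum_index i \<noteq> 0} = {j. j < length x \<and> x ! j \<noteq> 0}"
  proof (intro subset_antisym subsetI)
    fix j assume "j \<in> {j. j < length x \<and> x ! j \<noteq> 0}"
    then show "j \<in> enum_index ` {i :: 'n. x ! enum_index i \<noteq> 0}"
      using assms enum_index_nth[of j, where 'n='n]
      by (intro image_eqI[of _ _ "enum_class.enum ! j"]) auto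
  qed (use assms enum_index_less in auto)
  then have "card {i :: 'n. x ! enum_index i \<noteq> 0} = card {j. j < length x \<and> x ! j \<noteq> 0}"
    using card_image[OF inj_on_subset[OF inj subset_UNIV]] by metis
  then show ?thesis
    by (simp add: hamming_weight_def list_weight_def length_filter_conv_card)
qed

lemma herm_inner_vec_of_list:
  assumes "length x = CARD('n)" "length y = CARD('n)"
  shows "herm_inner (vec_of_list x :: gf4 ^ 'n::enum) (vec_of_list y) = herm_inner_list x y"
  unfolding herm_inner_def vec_of_list_nth herm_inner_list_eq_sum[OF assms(1)[folded assms(2)]]
  using sum.reindex_bij_betw[OF bij_betw_enum_index, of "\<lambda>p. x ! p * (y ! p)\<^sup>2"] assms by simp

definition row_space :: "'a::field list list \<Rightarrow> ('a ^ 'n::enum) set" where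
  "row_space G = vec.span (vec_of_list ` set G)"

lemma row_space_eq:
  assumes rows: "\<forall>r\<in>set G. length r = CARD('n)"
  shows "(row_space G :: ('a::field ^ 'n::enum) set)
    = {vec_of_list (lin_comb CARD('n) G m) | m. length m = length G}" (is "_ = ?S")
proof (rule subset_antisym)
  have "vec.subspace ?S"
    unfolding vec.subspace_def
  proof (intro conjI ballI allI)
    show "0 \<in> ?S"
      using rows
      by (auto simp: lin_comb_zero vec_of_list_replicate_zero intro!: exI[of _ "replicate (length G) 0"])
  next
    fix x y assume "x \<in> ?S" "y \<in> ?S"
    then obtain m m' where "length m = length G" "x = vec_of_list (lin_comb CARD('n) G m)"
      "length m' = length G" "y = vec_of_list (lin_comb CARD('n) G m')"
      by auto
    then show "x + y \<in> ?S"
      using rows by (auto simp: lin_comb_add vec_of_list_add intro!: exI[of _ "map2 (+) m m'"])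
  next
    fix c x assume "x \<in> ?S"
    then obtain m where "length m = length G" "x = vec_of_list (lin_comb CARD('n) G m)"
      by auto
    then show "c *s x \<in> ?S"
      using rows by (auto simp: lin_comb_scale vec_of_list_scale intro!: exI[of _ "map ((*) c) m"])
  qed
  moreover have "vec_of_list ` set G \<subseteq> ?S"
  proof
    fix v :: "'a ^ 'n::enum" assume "v \<in> vec_of_list ` set G"
    then obtain i where "i < length G" "v = vec_of_list (G ! i)"
      by (auto simp: in_set_conv_nth)
    then show "v \<in> ?S"
      using lin_comb_id_row[OF rows]
      by (auto simp: id_rows_def intro!: exI[of _ "id_rows (length G) ! i"])
  qed
  ultimately show "row_space G \<subseteq> ?S"
    unfolding row_space_def by (rule vec.span_minimal[rotated])
next
  show "?S \<subseteq> row_space G"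
  proof
    fix x assume "x \<in> ?S"
    then obtain m where "length m = length G" "x = vec_of_list (lin_comb CARD('n) G m)"
      by auto
    then show "x \<in> row_space G"
      using rows unfolding row_space_def
      by (simp add: vec_of_list_lin_comb) (intro vec.span_sum vec.span_scale vec.span_base; simp)
  qed
qed

lemma dim_row_space:
  assumes rows: "\<forall>r\<in>set G. length r = CARD('n)"
    and full_rank: "\<And>m. length m = length G \<Longrightarrow> lin_comb CARD('n) G m = replicate CARD('n) 0
      \<Longrightarrow> m = replicate (length G) 0"
  shows "vec.dim (row_space G :: ('a::field ^ 'n::enum) set) = length G"
proof -
  define \<rho> :: "nat \<Rightarrow> 'a ^ 'n::enum" where "\<rho> i = vec_of_list (G ! i)" for i
  have family: "c i = 0" if "(\<Sum>i<length G. c i *s \<rho> i) = 0" "i < length G" for c i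
  proof -
    define m where "m = map c [0..<length G]"
    have "vec_of_list (lin_comb CARD('n) G m)
        = (vec_of_list (replicate CARD('n) 0) :: 'a ^ 'n::enum)"
      using that(1) rows by (simp add: m_def vec_of_list_lin_comb vec_of_list_replicate_zero \<rho>_def)
    then have "m = replicate (length G) 0"
      using rows by (intro full_rank) (simp_all add: m_def vec_of_list_inject)
    then have "m ! i = 0"
      using that(2) by simp
    then show "c i = 0"
      using that(2) by (simp add: m_def)
  qed
  have inj: "inj_on \<rho> {..<length G}"
  proof (rule inj_onI, rule ccontr)
    fix i j assume ij: "i \<in> {..<length G}" "j \<in> {..<length G}" "\<rho> i = \<rho> j" "i \<noteq> j"
    define c where "c l = (if l = i then 1 else 0) - (if l = j then 1 else (0::'a))" for l
    have "(\<Sum>l<length G. c l *s \<rho> l) = \<rho> i - \<rho> j"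
      using ij
      by (simp add: c_def vec.scale_left_diff_distrib sum_subtractf if_distrib[of "\<lambda>a. a *s _"]
          cong: if_cong)
    then have "c i = 0"
      using ij by (intro family) simp_all
    then show False
      using ij by (simp add: c_def)
  qed
  have "vec.independent (\<rho> ` {..<length G})"
    unfolding vec.independent_explicit
  proof (intro conjI allI impI ballI)
    fix c v assume "(\<Sum>v\<in>\<rho> ` {..<length G}. c v *s v) = 0" "v \<in> \<rho> ` {..<length G}"
    then show "c v = 0"
      using family[of "c \<circ> \<rho>"] by (auto simp: sum.reindex[OF inj])
  qed simp
  moreover have "vec_of_list ` set G = \<rho> ` {..<length G}"
    by (auto simp: \<rho>_def set_conv_nth)
  ultimately show ?thesis
    unfolding row_space_def by (simp add: vec.dim_eq_card_independent card_image[OF inj])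
qed

lemma min_weight_row_space:
  assumes rows: "\<forall>r\<in>set G. length r = CARD('n)"
    and lower: "\<And>m. length m = length G \<Longrightarrow> 0 < list_weight m
      \<Longrightarrow> d \<le> list_weight (lin_comb CARD('n) G m)"
    and witness: "length w = length G" "list_weight (lin_comb CARD('n) G w) = d" "0 < d"
  shows "min_weight (row_space G :: (gf4 ^ 'n::enum) set) = d"
  unfolding min_weight_def
proof (rule Min_eqI)
  fix h assume "h \<in> hamming_weight ` (row_space G - {0} :: (gf4 ^ 'n::enum) set)"
  then obtain x :: "gf4 ^ 'n::enum" where x: "x \<in> row_space G" "x \<noteq> 0" "h = hamming_weight x"
    by blast
  then obtain m where m: "length m = length G" "x = vec_of_list (lin_comb CARD('n) G m)"
    using rows by (auto simp: row_space_eq)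
  then have nonzero: "(vec_of_list (lin_comb CARD('n) G m) :: gf4 ^ 'n::enum) \<noteq> 0"
    and h: "h = list_weight (lin_comb CARD('n) G m)"
    using x rows by (simp_all add: hamming_weight_vec_of_list)
  have "0 < list_weight m"
  proof (rule ccontr)
    assume "\<not> 0 < list_weight m"
    then have "m = replicate (length G) 0"
      using m(1) list_weight_eq_0_iff[of m] by simp
    then show False
      using nonzero lin_comb_zero[OF rows] by (simp add: vec_of_list_replicate_zero)
  qed
  then show "d \<le> h"
    using lower m h by simp
next
  define x :: "gf4 ^ 'n::enum" where "x = vec_of_list (lin_comb CARD('n) G w)"
  have "hamming_weight x = d"
    using rows witness(2) by (simp add: x_def hamming_weight_vec_of_list)
  moreover have "x \<in> row_space G"
    using rows witness(1) by (auto simp: x_def row_space_eq)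
  moreover have "x \<noteq> 0"
    using witness(3) \<open>hamming_weight x = d\<close> by auto
  ultimately show "d \<in> hamming_weight ` (row_space G - {0} :: (gf4 ^ 'n::enum) set)"
    by blast
qed simp

lemma herm_LCD_row_space:
  assumes rows: "\<forall>r\<in>set G. length r = CARD('n)" and inv: "is_left_inverse N (herm_gram G)"
  shows "herm_LCD (row_space G :: (gf4 ^ 'n::enum) set)"
  unfolding herm_LCD_def
proof (intro subset_antisym subsetI)
  fix y :: "gf4 ^ 'n::enum" assume y: "y \<in> row_space G \<inter> herm_dual (row_space G)"
  then obtain m where m: "length m = length G" "y = vec_of_list (lin_comb CARD('n) G m)"
    using rows by (auto simp: row_space_eq)
  define s where "s = map (\<lambda>a. a\<^sup>2) m"
  have "(\<Sum>i<length G. herm_gram G ! j ! i * s ! i) = 0" if j: "j < length G" for j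
  proof -
    have "vec_of_list (G ! j) \<in> row_space G"
      using j unfolding row_space_def by (intro vec.span_base) simp
    then have "herm_inner (vec_of_list (G ! j)) y = 0"
      using y by (auto simp: herm_dual_def)
    then have "herm_inner_list (G ! j) (lin_comb CARD('n) G m) = 0"
      using rows j m by (simp add: herm_inner_vec_of_list)
    then show ?thesis
      using herm_inner_list_lin_comb[of G "G ! j" m] rows j m
      by (simp add: herm_gram_def s_def mult.commute)
  qed
  then have "s = replicate (length G) 0"
    using left_inverse_kernel[OF inv] by (simp add: herm_gram_def s_def m(1))
  have "m ! i = 0" if "i < length G" for i
  proof -
    have "(m ! i)\<^sup>2 = s ! i"
      using that m(1) by (simp add: s_def)
    also have "\<dots> = 0"
      using \<open>s = replicate (length G) 0\<close> that by simp
    finally show ?thesis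
      by simp
  qed
  then have "m = replicate (length G) 0"
    using m(1) by (intro nth_equalityI) simp_all
  then show "y \<in> {0}"
    using rows m by (simp add: lin_comb_zero vec_of_list_replicate_zero)
qed (simp add: herm_dual_def herm_inner_def row_space_def vec.span_zero)

lemma is_code_row_space:
  assumes rows: "\<forall>r\<in>set G. length r = CARD('n)"
    and full_rank: "\<And>m. length m = length G \<Longrightarrow> lin_comb CARD('n) G m = replicate CARD('n) 0
      \<Longrightarrow> m = replicate (length G) 0"
    and lower: "\<And>m. length m = length G \<Longrightarrow> 0 < list_weight m
      \<Longrightarrow> d \<le> list_weight (lin_comb CARD('n) G m)"
    and witness: "length w = length G" "list_weight (lin_comb CARD('n) G w) = d" "0 < d"
  shows "is_code (row_space G :: (gf4 ^ 'n::enum) set) (length G) d"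
proof -
  have "min_weight (row_space G :: (gf4 ^ 'n::enum) set) = d"
    using rows lower witness by (rule min_weight_row_space)
  moreover have "(vec_of_list (lin_comb CARD('n) G w) :: gf4 ^ 'n::enum) \<noteq> 0"
    using rows witness hamming_weight_zero
    by (metis hamming_weight_vec_of_list length_lin_comb not_less0)
  moreover have "(vec_of_list (lin_comb CARD('n) G w) :: gf4 ^ 'n::enum) \<in> row_space G"
    using rows witness(1) by (auto simp: row_space_eq)
  ultimately show ?thesis
    using dim_row_space[OF rows full_rank] unfolding is_code_def row_space_def
    by (auto intro: vec.subspace_span)
qed

section \<open>A [25,15,7] code and its shortenings\<close>

definition P25 :: "gf4 list list" where
  "P25 = [[WW4,Z4,O4,W4,O4,Z4,O4,W4,W4,WW4],
    [O4,W4,Z4,O4,Z4,O4,O4,WW4,W4,WW4],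
    [W4,O4,WW4,Z4,O4,W4,WW4,Z4,O4,W4],
    [W4,WW4,WW4,Z4,W4,WW4,W4,WW4,WW4,W4],
    [O4,W4,O4,WW4,Z4,W4,W4,WW4,Z4,O4],
    [W4,Z4,O4,Z4,O4,O4,WW4,W4,WW4,O4],
    [Z4,O4,W4,Z4,O4,WW4,O4,O4,WW4,W4],
    [O4,WW4,Z4,O4,W4,WW4,Z4,O4,W4,W4],
    [O4,Z4,O4,W4,Z4,W4,WW4,O4,O4,WW4],
    [Z4,O4,Z4,O4,W4,WW4,W4,WW4,O4,O4],
    [WW4,WW4,Z4,W4,W4,W4,WW4,WW4,W4,WW4],
    [WW4,Z4,W4,W4,WW4,WW4,WW4,W4,WW4,W4],
    [Z4,W4,W4,WW4,WW4,WW4,W4,WW4,W4,WW4],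
    [Z4,O4,W4,O4,WW4,O4,W4,W4,WW4,Z4],
    [W4,W4,WW4,WW4,Z4,W4,WW4,W4,WW4,WW4]]"

text \<open>\<open>P25_alt1\<close>, \<open>P25_alt2\<close>, \<open>P25_alt3\<close> are the redundancy matrices of the same code with respect
  to the information sets formed by one block of five message positions and the ten redundancy
  positions (see \<open>P25_alternative_systematic_forms\<close>).\<close>

definition P25_alt1 :: "gf4 list list" where
  "P25_alt1 = [[W4,O4,Z4,WW4,WW4,W4,O4,O4,Z4,WW4],
    [WW4,W4,O4,WW4,W4,O4,Z4,Z4,WW4,WW4],
    [Z4,O4,O4,W4,Z4,Z4,Z4,W4,O4,WW4],
    [O4,W4,W4,Z4,Z4,W4,WW4,W4,WW4,WW4],
    [W4,Z4,O4,Z4,O4,W4,WW4,Z4,O4,Z4],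
    [WW4,W4,W4,O4,WW4,W4,W4,Z4,W4,W4],
    [Z4,W4,W4,W4,O4,O4,WW4,Z4,O4,WW4],
    [W4,O4,Z4,W4,O4,WW4,W4,WW4,O4,O4],
    [O4,WW4,WW4,WW4,W4,WW4,Z4,O4,WW4,Z4],
    [WW4,WW4,WW4,WW4,WW4,O4,Z4,WW4,W4,O4],
    [O4,W4,W4,WW4,W4,O4,W4,O4,O4,WW4],
    [W4,WW4,O4,O4,W4,WW4,WW4,WW4,W4,W4],
    [WW4,O4,W4,O4,WW4,WW4,WW4,WW4,W4,O4],
    [O4,Z4,Z4,O4,O4,W4,WW4,O4,W4,Z4],
    [WW4,WW4,W4,W4,W4,W4,W4,O4,W4,WW4]]"

definition P25_alt2 :: "gf4 list list" where
  "P25_alt2 = [[O4,W4,O4,W4,Z4,WW4,Z4,Z4,O4,Z4],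
    [WW4,Z4,O4,W4,W4,O4,WW4,W4,W4,Z4],
    [Z4,O4,W4,Z4,W4,W4,O4,WW4,WW4,W4],
    [W4,WW4,O4,O4,Z4,W4,O4,W4,Z4,WW4],
    [W4,W4,Z4,WW4,WW4,O4,W4,WW4,Z4,W4],
    [O4,O4,WW4,O4,W4,Z4,O4,W4,WW4,WW4],
    [Z4,O4,WW4,W4,WW4,W4,Z4,W4,WW4,WW4],
    [Z4,Z4,O4,Z4,O4,O4,O4,O4,O4,W4],
    [O4,Z4,Z4,O4,O4,O4,O4,W4,O4,Z4],
    [O4,O4,W4,O4,W4,WW4,WW4,WW4,W4,WW4],
    [W4,O4,WW4,WW4,O4,Z4,O4,WW4,W4,O4],
    [O4,W4,W4,W4,W4,WW4,W4,W4,W4,Z4],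
    [WW4,O4,Z4,Z4,WW4,W4,W4,Z4,W4,Z4],
    [O4,WW4,Z4,Z4,WW4,W4,Z4,Z4,WW4,O4],
    [O4,O4,O4,WW4,WW4,O4,WW4,WW4,O4,W4]]"

definition P25_alt3 :: "gf4 list list" where
  "P25_alt3 = [[W4,WW4,O4,Z4,WW4,Z4,W4,O4,O4,WW4],
    [O4,W4,Z4,WW4,WW4,O4,WW4,Z4,W4,WW4],
    [O4,O4,W4,W4,Z4,WW4,W4,Z4,WW4,O4],
    [Z4,Z4,W4,W4,W4,O4,O4,WW4,WW4,W4],
    [WW4,WW4,Z4,W4,WW4,Z4,O4,WW4,Z4,Z4],
    [Z4,WW4,O4,O4,W4,WW4,Z4,Z4,O4,Z4],
    [WW4,Z4,WW4,O4,O4,W4,Z4,W4,O4,W4],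
    [WW4,O4,Z4,Z4,W4,WW4,Z4,WW4,WW4,WW4],
    [Z4,WW4,Z4,WW4,WW4,O4,WW4,W4,O4,Z4],
    [W4,WW4,WW4,Z4,WW4,WW4,WW4,Z4,O4,Z4],
    [WW4,WW4,O4,Z4,W4,O4,O4,W4,O4,WW4],
    [Z4,O4,O4,WW4,W4,O4,O4,W4,Z4,W4],
    [W4,WW4,O4,W4,Z4,Z4,Z4,WW4,Z4,WW4],
    [O4,O4,WW4,WW4,Z4,WW4,O4,WW4,Z4,Z4],
    [W4,O4,WW4,O4,O4,Z4,W4,WW4,O4,Z4]]"

definition N12 :: "gf4 list list" where
  "N12 = [[Z4,O4,W4,O4,Z4,Z4,Z4,Z4,WW4,Z4,Z4,W4],
    [O4,O4,WW4,O4,W4,O4,WW4,WW4,W4,O4,W4,WW4],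
    [WW4,W4,Z4,W4,WW4,WW4,WW4,W4,W4,Z4,WW4,WW4],
    [O4,O4,WW4,Z4,W4,W4,O4,WW4,W4,WW4,W4,WW4],
    [Z4,WW4,W4,WW4,Z4,WW4,W4,O4,WW4,WW4,WW4,W4],
    [Z4,O4,W4,WW4,W4,O4,W4,O4,WW4,WW4,O4,O4],
    [Z4,W4,W4,O4,WW4,WW4,O4,Z4,O4,O4,WW4,Z4],
    [Z4,W4,WW4,W4,O4,O4,Z4,Z4,O4,W4,O4,O4],
    [W4,WW4,WW4,WW4,W4,W4,O4,O4,O4,W4,O4,O4],
    [Z4,O4,Z4,W4,W4,W4,O4,WW4,WW4,Z4,Z4,WW4],
    [Z4,WW4,W4,WW4,W4,O4,W4,O4,O4,Z4,Z4,O4],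
    [WW4,W4,W4,W4,WW4,O4,Z4,O4,O4,W4,O4,Z4]]"

definition N13 :: "gf4 list list" where
  "N13 = [[O4,WW4,WW4,W4,W4,WW4,W4,O4,W4,Z4,WW4,WW4,WW4],
    [W4,Z4,Z4,WW4,WW4,WW4,W4,Z4,O4,O4,Z4,Z4,W4],
    [W4,Z4,O4,O4,O4,Z4,O4,WW4,WW4,Z4,Z4,W4,WW4],
    [WW4,W4,O4,O4,O4,WW4,W4,O4,Z4,WW4,WW4,O4,O4],
    [WW4,W4,O4,O4,O4,O4,WW4,W4,Z4,WW4,O4,O4,W4],
    [W4,W4,Z4,W4,O4,Z4,O4,WW4,O4,WW4,Z4,WW4,O4],
    [WW4,WW4,O4,WW4,W4,O4,Z4,WW4,W4,O4,O4,WW4,W4],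
    [O4,Z4,W4,O4,WW4,W4,W4,O4,Z4,W4,W4,Z4,WW4],
    [WW4,O4,W4,Z4,Z4,O4,WW4,Z4,Z4,W4,W4,Z4,WW4],
    [Z4,O4,Z4,W4,W4,W4,O4,WW4,WW4,Z4,Z4,WW4,Z4],
    [W4,Z4,Z4,W4,O4,Z4,O4,WW4,WW4,Z4,O4,WW4,O4],
    [W4,Z4,WW4,O4,O4,W4,W4,Z4,Z4,W4,W4,O4,WW4],
    [W4,WW4,W4,O4,WW4,O4,WW4,W4,W4,Z4,O4,W4,O4]]"

definition N14 :: "gf4 list list" where
  "N14 = [[Z4,WW4,O4,Z4,O4,Z4,Z4,WW4,W4,Z4,Z4,Z4,W4,W4],
    [W4,Z4,Z4,WW4,WW4,WW4,W4,Z4,O4,O4,Z4,Z4,W4,Z4],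
    [O4,Z4,Z4,Z4,WW4,W4,Z4,W4,WW4,Z4,W4,Z4,Z4,O4],
    [Z4,W4,Z4,Z4,WW4,O4,WW4,Z4,Z4,WW4,O4,WW4,W4,O4],
    [O4,W4,W4,W4,Z4,Z4,Z4,O4,Z4,WW4,Z4,Z4,Z4,WW4],
    [Z4,W4,WW4,O4,Z4,O4,W4,Z4,O4,WW4,O4,W4,WW4,WW4],
    [Z4,WW4,Z4,W4,Z4,WW4,O4,W4,W4,O4,WW4,O4,O4,O4],
    [W4,Z4,WW4,Z4,O4,Z4,WW4,Z4,Z4,W4,Z4,W4,Z4,O4],
    [WW4,O4,W4,Z4,Z4,O4,WW4,Z4,Z4,W4,W4,Z4,WW4,Z4],
    [Z4,O4,Z4,W4,W4,W4,O4,WW4,WW4,Z4,Z4,WW4,Z4,Z4],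
    [Z4,Z4,WW4,O4,Z4,O4,W4,Z4,WW4,Z4,Z4,W4,WW4,WW4],
    [Z4,Z4,Z4,W4,Z4,WW4,O4,WW4,Z4,W4,WW4,Z4,O4,WW4],
    [WW4,WW4,Z4,WW4,Z4,W4,O4,Z4,W4,Z4,W4,O4,Z4,W4],
    [WW4,Z4,O4,O4,W4,W4,O4,O4,Z4,Z4,W4,W4,WW4,O4]]"

definition N15 :: "gf4 list list" where
  "N15 = [[Z4,WW4,O4,Z4,O4,Z4,Z4,WW4,W4,Z4,Z4,Z4,W4,W4,Z4],
    [W4,Z4,Z4,WW4,WW4,WW4,W4,Z4,O4,O4,Z4,Z4,W4,Z4,Z4],
    [O4,Z4,Z4,Z4,WW4,W4,Z4,W4,WW4,Z4,W4,Z4,Z4,O4,Z4],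
    [Z4,W4,Z4,O4,WW4,Z4,Z4,Z4,Z4,WW4,WW4,O4,O4,Z4,W4],
    [O4,W4,W4,W4,Z4,Z4,Z4,O4,Z4,WW4,Z4,Z4,Z4,WW4,Z4],
    [Z4,W4,WW4,Z4,Z4,Z4,O4,Z4,O4,WW4,WW4,Z4,Z4,W4,W4],
    [Z4,WW4,Z4,Z4,Z4,O4,Z4,W4,W4,O4,Z4,W4,Z4,WW4,WW4],
    [W4,Z4,WW4,Z4,O4,Z4,WW4,Z4,Z4,W4,Z4,W4,Z4,O4,Z4],
    [WW4,O4,W4,Z4,Z4,O4,WW4,Z4,Z4,W4,W4,Z4,WW4,Z4,Z4],
    [Z4,O4,Z4,W4,W4,W4,O4,WW4,WW4,Z4,Z4,WW4,Z4,Z4,Z4],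
    [Z4,Z4,WW4,W4,Z4,W4,Z4,Z4,WW4,Z4,O4,WW4,O4,Z4,O4],
    [Z4,Z4,Z4,O4,Z4,Z4,WW4,WW4,Z4,W4,W4,O4,WW4,Z4,O4],
    [WW4,WW4,Z4,O4,Z4,Z4,Z4,Z4,W4,Z4,O4,W4,O4,Z4,WW4],
    [WW4,Z4,O4,Z4,W4,WW4,W4,O4,Z4,Z4,Z4,Z4,Z4,Z4,W4],
    [Z4,Z4,Z4,WW4,Z4,WW4,W4,Z4,Z4,Z4,O4,O4,W4,WW4,O4]]"

lemmas gf4_arith = zero_gf4_def one_gf4_def plus_gf4_def times_gf4_def

lemma P25_dims: "length P25 = 15" "\<forall>r\<in>set P25. length r = 10"
  and P25_alt1_dims: "length P25_alt1 = 15" "\<forall>r\<in>set P25_alt1. length r = 10"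
  and P25_alt2_dims: "length P25_alt2 = 15" "\<forall>r\<in>set P25_alt2. length r = 10"
  and P25_alt3_dims: "length P25_alt3 = 15" "\<forall>r\<in>set P25_alt3. length r = 10"
  by (simp_all add: P25_def P25_alt1_def P25_alt2_def P25_alt3_def)

lemma P25_min_weight_check: "min_weight_check 7 P25 3 0 (replicate 10 0)"
  by (simp add: P25_def gf4_arith numeral_eq_Suc)

lemma P25_alt1_min_weight_check: "min_weight_check 7 P25_alt1 3 0 (replicate 10 0)"
  by (simp add: P25_alt1_def gf4_arith numeral_eq_Suc)

lemma P25_alt2_min_weight_check: "min_weight_check 7 P25_alt2 3 0 (replicate 10 0)"
  by (simp add: P25_alt2_def gf4_arith numeral_eq_Suc)

lemma P25_alt3_min_weight_check: "min_weight_check 7 P25_alt3 3 0 (replicate 10 0)"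
  by (simp add: P25_alt3_def gf4_arith numeral_eq_Suc)

lemma P25_alt1_information_set:
  "\<forall>r\<in>set (systematic P25).
    map ((!) r) [5..<15] = lin_comb 10 P25_alt1 (map ((!) r) ([0..<5] @ [15..<25]))"
  by (simp add: P25_def P25_alt1_def systematic_def id_rows_def gf4_arith upt_rec numeral_eq_Suc)

lemma P25_alt2_information_set:
  "\<forall>r\<in>set (systematic P25).
    map ((!) r) ([0..<5] @ [10..<15]) = lin_comb 10 P25_alt2 (map ((!) r) ([5..<10] @ [15..<25]))"
  by (simp add: P25_def P25_alt2_def systematic_def id_rows_def gf4_arith upt_rec numeral_eq_Suc)

lemma P25_alt3_information_set:
  "\<forall>r\<in>set (systematic P25). map ((!) r) [0..<10] = lin_comb 10 P25_alt3 (map ((!) r) [10..<25])"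
  by (simp add: P25_def P25_alt3_def systematic_def id_rows_def gf4_arith upt_rec numeral_eq_Suc)

lemma P25_alternative_systematic_forms:
  assumes len: "length b1 = 5" "length b2 = 5" "length b3 = 5"
  defines "R \<equiv> lin_comb 10 P25 (b1 @ b2 @ b3)"
  shows "b2 @ b3 = lin_comb 10 P25_alt1 (b1 @ R)"
    and "b1 @ b3 = lin_comb 10 P25_alt2 (b2 @ R)"
    and "b1 @ b2 = lin_comb 10 P25_alt3 (b3 @ R)"
proof -
  let ?c = "b1 @ b2 @ b3 @ R"
  have lenR: "length R = 10"
    using P25_dims by (simp add: R_def)
  have info_set: "map ((!) ?c) J = lin_comb 10 A (map ((!) ?c) I)"
    if "\<forall>r\<in>set (systematic P25). map ((!) r) J = lin_comb 10 A (map ((!) r) I)"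
      "length A = length I" "\<forall>a\<in>set A. length a = 10" "length J = 10"
      "\<forall>i\<in>set I. i < 25" "\<forall>j\<in>set J. j < 25" for I J A
    using lin_comb_information_set[of "systematic P25" 25 "b1 @ b2 @ b3" I J A] that len
      systematic_rows[OF P25_dims(2)] lin_comb_systematic[OF P25_dims(2), of "b1 @ b2 @ b3"]
      P25_dims(1)
    by (simp add: R_def)
  have "map ((!) ?c) [5..<15] = lin_comb 10 P25_alt1 (map ((!) ?c) ([0..<5] @ [15..<25]))"
    by (rule info_set[OF P25_alt1_information_set]) (simp_all add: P25_alt1_dims)
  then show "b2 @ b3 = lin_comb 10 P25_alt1 (b1 @ R)"
    using len lenR by (simp add: map_nth_upt del: upt_rec_numeral)
  have "map ((!) ?c) ([0..<5] @ [10..<15])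
      = lin_comb 10 P25_alt2 (map ((!) ?c) ([5..<10] @ [15..<25]))"
    by (rule info_set[OF P25_alt2_information_set]) (simp_all add: P25_alt2_dims)
  then show "b1 @ b3 = lin_comb 10 P25_alt2 (b2 @ R)"
    using len lenR by (simp add: map_nth_upt del: upt_rec_numeral)
  have "map ((!) ?c) [0..<10] = lin_comb 10 P25_alt3 (map ((!) ?c) [10..<25])"
    by (rule info_set[OF P25_alt3_information_set]) (simp_all add: P25_alt3_dims)
  then show "b1 @ b2 = lin_comb 10 P25_alt3 (b3 @ R)"
    using len lenR by (simp add: map_nth_upt del: upt_rec_numeral)
qed

lemma systematic_P25_min_weight:
  assumes m: "length m = 15" "0 < list_weight m"
  shows "7 \<le> list_weight (lin_comb 25 (systematic P25) m)"
proof -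
  define b1 b2 b3 where "b1 = take 5 m" and "b2 = take 5 (drop 5 m)" and "b3 = drop 10 m"
  have len: "length b1 = 5" "length b2 = 5" "length b3 = 5"
    using m(1) by (simp_all add: b1_def b2_def b3_def)
  have blocks: "m = b1 @ b2 @ b3"
    using append_take_drop_id[of 5 m] append_take_drop_id[of 5 "drop 5 m"]
    by (simp add: b1_def b2_def b3_def)
  define R where "R = lin_comb 10 P25 m"
  have lenR: "length R = 10"
    using P25_dims by (simp add: R_def)
  note alt = P25_alternative_systematic_forms[OF len, folded blocks, folded R_def]
  have "lin_comb 25 (systematic P25) m = m @ R"
    using lin_comb_systematic[OF P25_dims(2)] m(1) P25_dims(1) by (simp add: R_def)
  then have weight: "list_weight (lin_comb 25 (systematic P25) m)
      = list_weight b1 + list_weight b2 + list_weight b3 + list_weight R"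
    by (simp add: blocks)
  have pos: "0 < list_weight b1 + list_weight b2 + list_weight b3 + list_weight R"
    using m(2) by (simp add: blocks)
  show ?thesis
  proof (rule ccontr)
    assume "\<not> ?thesis"
    then have small: "list_weight b1 + list_weight b2 + list_weight b3 + list_weight R \<le> 6"
      using weight by simp
    \<comment> \<open>Otherwise \<open>wt m \<ge> 4\<close>, so \<open>wt R \<le> 2\<close> and the weights of the three sets \<open>(b\<^sub>j, R)\<close>
      sum to \<open>wt m + 3 wt R \<le> 10\<close>.\<close>
    consider "list_weight m \<le> 3" | "list_weight (b1 @ R) \<le> 3"
      | "list_weight (b2 @ R) \<le> 3" | "list_weight (b3 @ R) \<le> 3"
      using small by (simp only: blocks list_weight_append) linarith
    then show False
    proof cases
      case 1
      have "7 \<le> list_weight m + list_weight R"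
        by (rule min_weight_check_information_set[OF P25_min_weight_check P25_dims(2) _ 1 R_def])
          (use m P25_dims pos blocks in simp_all)
      then show False
        using small by (simp add: blocks)
    next
      case 2
      have "7 \<le> list_weight (b1 @ R) + list_weight (b2 @ b3)"
        by (rule min_weight_check_information_set
            [OF P25_alt1_min_weight_check P25_alt1_dims(2) _ 2 alt(1)])
          (use len lenR pos P25_alt1_dims in auto)
      then show False
        using small by simp
    next
      case 3
      have "7 \<le> list_weight (b2 @ R) + list_weight (b1 @ b3)"
        by (rule min_weight_check_information_set
            [OF P25_alt2_min_weight_check P25_alt2_dims(2) _ 3 alt(2)])
          (use len lenR pos P25_alt2_dims in auto)
      then show False
        using small by simp
    next
      case 4
      have "7 \<le> list_weight (b3 @ R) + list_weight (b1 @ b2)"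
        by (rule min_weight_check_information_set
            [OF P25_alt3_min_weight_check P25_alt3_dims(2) _ 4 alt(3)])
          (use len lenR pos P25_alt3_dims in auto)
      then show False
        using small by simp
    qed
  qed
qed

lemma P25_weight_7_codeword:
  "list_weight (lin_comb 25 (systematic P25) ([1, 0, W4] @ replicate 12 0)) = 7"
  by (simp add: P25_def systematic_def id_rows_def gf4_arith upt_rec numeral_eq_Suc)

lemma shortened_P25_herm_LCD_code:
  assumes n: "CARD('n) = k + 10" and k: "12 \<le> k" "k \<le> 15"
    and inv: "is_left_inverse N (herm_gram (systematic (take k P25)))"
  shows "\<exists>C :: (gf4 ^ 'n::enum) set. is_code C k 7 \<and> herm_LCD C"
proof -
  define G where "G = systematic (take k P25)"
  have take_rows: "\<forall>r\<in>set (take k P25). length r = 10"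
    using P25_dims(2) by (auto dest: in_set_takeD)
  have lenG: "length G = k"
    using k P25_dims(1) by (simp add: G_def)
  have rows: "\<forall>r\<in>set G. length r = CARD('n)"
    using systematic_rows[OF take_rows] k P25_dims(1) n by (simp add: G_def)
  have weight: "list_weight (lin_comb CARD('n) G m)
      = list_weight (lin_comb 25 (systematic P25) (m @ replicate (15 - k) 0))"
    if "length m = k" for m
    using lin_comb_systematic_take[OF P25_dims(2) that]
      lin_comb_systematic[OF P25_dims(2), of "m @ replicate (15 - k) 0"]
      that k P25_dims(1) n by (simp add: G_def)
  have full_rank: "m = replicate (length G) 0"
    if "length m = length G" "lin_comb CARD('n) G m = replicate CARD('n) 0" for m
    using systematic_full_rank[OF take_rows, of m] that k P25_dims(1) n by (simp add: G_def)
  have lower: "7 \<le> list_weight (lin_comb CARD('n) G m)"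
    if "length m = length G" "0 < list_weight m" for m
    using systematic_P25_min_weight[of "m @ replicate (15 - k) 0"] weight[of m] that lenG k by simp
  define w :: "gf4 list" where "w = [1, 0, W4] @ replicate (k - 3) 0"
  have "w @ replicate (15 - k) 0 = [1, 0, W4] @ replicate 12 0"
    using k by (simp add: w_def replicate_add[symmetric])
  then have witness: "list_weight (lin_comb CARD('n) G w) = 7"
    using weight[of w] P25_weight_7_codeword k by (simp add: w_def)
  have "is_code (row_space G :: (gf4 ^ 'n::enum) set) k 7"
    using is_code_row_space[OF rows full_rank lower, of w] witness lenG k by (simp add: w_def)
  moreover have "herm_LCD (row_space G :: (gf4 ^ 'n::enum) set)"
    using herm_LCD_row_space[OF rows] inv by (simp add: G_def)
  ultimately show ?thesis
    by blast
qed

lemma N12_inverse: "is_left_inverse N12 (herm_gram (systematic (take 12 P25)))"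
  by (simp add: is_left_inverse_def herm_gram_def herm_inner_list_def systematic_def id_rows_def
      N12_def P25_def gf4_arith power2_eq_square upt_rec numeral_eq_Suc)

lemma N13_inverse: "is_left_inverse N13 (herm_gram (systematic (take 13 P25)))"
  by (simp add: is_left_inverse_def herm_gram_def herm_inner_list_def systematic_def id_rows_def
      N13_def P25_def gf4_arith power2_eq_square upt_rec numeral_eq_Suc)

lemma N14_inverse: "is_left_inverse N14 (herm_gram (systematic (take 14 P25)))"
  by (simp add: is_left_inverse_def herm_gram_def herm_inner_list_def systematic_def id_rows_def
      N14_def P25_def gf4_arith power2_eq_square upt_rec numeral_eq_Suc)

lemma N15_inverse: "is_left_inverse N15 (herm_gram (systematic (take 15 P25)))"
  by (simp add: is_left_inverse_def herm_gram_def herm_inner_list_def systematic_def id_rows_def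
      N15_def P25_def gf4_arith power2_eq_square upt_rec numeral_eq_Suc)

theorem lemma6p1:
  shows "(\<exists>C :: (gf4 ^ 22) set. is_code C 12 7 \<and> herm_LCD C)
       \<and> (\<exists>C :: (gf4 ^ 23) set. is_code C 13 7 \<and> herm_LCD C)
       \<and> (\<exists>C :: (gf4 ^ 24) set. is_code C 14 7 \<and> herm_LCD C)
       \<and> (\<exists>C :: (gf4 ^ 25) set. is_code C 15 7 \<and> herm_LCD C)"
  using shortened_P25_herm_LCD_code[where 'n=22, OF _ _ _ N12_inverse]
    shortened_P25_herm_LCD_code[where 'n=23, OF _ _ _ N13_inverse]
    shortened_P25_herm_LCD_code[where 'n=24, OF _ _ _ N14_inverse]
    shortened_P25_herm_LCD_code[where 'n=25, OF _ _ _ N15_inverse]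
  by simp

end
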